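(* Let $u$ be the solution of the Cauchy problem in the context and let $X(x,t)$ be the value at time $t$ of the solution of the quasispecies equation \[ \dot y=-\sigma y(1-y)+m_0f_0(1-y)-m_1f_1y,\qquad y(0)=x. \] Then $1\ge u(x,t)\ge X(x,t)$ for all $0\le x\le1$ and $t\ge0$.
   Context: Constants: $f_0>0$, $f_1\ge0$ with $\sigma=f_0-f_1>0$; $\lambda_0,\lambda_1\ge0$; $\gamma_0,\gamma_1\in(0,1]$; $m_0=\lambda_0\gamma_0$, $m_1=\lambda_1\gamma_1$. With $\mathcal{J}_0u(x,t)=u(x+\gamma_0(1-x),t)-u(x,t)$ and $\mathcal{J}_1u(x,t)=u(x-\gamma_1x,t)-u(x,t)$, $u$ is the unique (mild) solution, which is $C^\infty$ on $[0,1]\times[0,\infty)$, of \[ \partial_tu+\sigma(1-x)x\,\partial_xu=\lambda_0f_0\mathcal{J}_0u+\lambda_1f_1\mathcal{J}_1u\ (0\le x\le1,\ t>0),\quad u(x,0)=x. \] ($u(x,t)$ is the expected frequency of species 1 under rare mutations.) *)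

theory Defs
  imports "HOL-Analysis.Analysis"
begin

end

theory Submission
  imports Defs
begin

(* The quasispecies field factors as sigma (y - r) (y - r - d) with d >= 0 and r + d >= 1, so its
   flow has the closed form X x t = r + (x - r) / (1 - (x - r - d) F t) with F' = sigma (1 + d F).
   This flow is convex in x and solves the transport equation X_t = b(x) X_x, b the quasispecies
   field. By convexity each jump term is bounded below by its tangent-line value, and the tangent
   contributions add up to exactly the mutation part of b; hence X is a subsolution of the nonlocal
   equation solved by u. A maximum principle (at a maximum the jump terms are nonpositive and
   the transport term vanishes, as its coefficient is zero at the endpoints) gives X <= u, and
   applied to u - 1 it gives u <= 1. *)

lemma quasispecies_field_factorization:
  fixes s a0 b0 :: real
  assumes s: "s > 0" and a0: "a0 \<ge> 0" and b0: "b0 \<ge> 0"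
  obtains r d where "d \<ge> 0" "1 \<le> r + d"
    "\<And>y. - s*y*(1-y) + a0*(1-y) - b0*y = s*(y-r)*(y-r-d)"
proof -
  \<comment> \<open>\<open>r\<close> and \<open>r + d\<close> are the roots; \<open>1\<close> lies between them since the field is \<open>-b0 \<le> 0\<close> at \<open>1\<close>.\<close>
  define S where "S = s + a0 + b0"
  define q where "q = sqrt (S^2 - 4 * s * a0)"
  have "S^2 - 4 * s * a0 = (s - a0)^2 + b0*(2 * s + 2*a0 + b0)"
    by (simp add: S_def power2_eq_square algebra_simps)
  also have "\<dots> \<ge> 0" using s a0 b0 by (intro add_nonneg_nonneg mult_nonneg_nonneg) auto
  finally have discr: "S^2 - 4 * s * a0 \<ge> 0" .
  have q2: "q^2 = S^2 - 4 * s * a0" and q: "q \<ge> 0" using discr by (simp_all add: q_def)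
  define r where "r = (S - q)/(2 * s)"
  define d where "d = q/s"
  have "d \<ge> 0" using q s by (simp add: d_def)
  moreover have "2 * s - S \<le> q"
  proof (cases "2 * s \<le> S")
    case False
    have "(2 * s - S)^2 \<le> q^2" unfolding q2 S_def using b0 s by (simp add: power2_eq_square algebra_simps)
    then show ?thesis using q by (meson power2_le_imp_le)
  qed (use q in auto)
  then have "1 \<le> r + d" using s by (simp add: r_def d_def field_simps)
  moreover have "- s*y*(1-y) + a0*(1-y) - b0*y = s*(y-r)*(y-r-d)" for y
  proof -
    have "s*(y-r)*(y-r-d) = s*y^2 - S*y + (S^2 - q^2)/(4 * s)"
      using s by (simp add: r_def d_def field_simps power2_eq_square)
    also have "(S^2 - q^2)/(4 * s) = a0" using s q2 by simp
    finally show ?thesis by (simp add: S_def power2_eq_square algebra_simps)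
  qed
  ultimately show ?thesis using that by blast
qed

lemma linear_ode_nonneg_solution_exists:
  fixes s d :: real
  assumes s: "s \<ge> 0"
  obtains F where "\<And>t. (F has_real_derivative s * (1 + d * F t)) (at t)"
    "F 0 = 0" "\<And>t. t \<ge> 0 \<Longrightarrow> F t \<ge> 0"
proof (cases "d = 0")
  case True
  show ?thesis
    by (rule that[of "\<lambda>t. s*t"]) (use True s in \<open>auto intro!: derivative_eq_intros\<close>)
next
  case False
  show ?thesis
  proof (rule that[of "\<lambda>t. (exp (s*d*t) - 1)/d"])
    show "((\<lambda>t. (exp (s*d*t) - 1)/d) has_real_derivative s * (1 + d * ((exp (s*d*t) - 1)/d))) (at t)" for t
      using False by (auto intro!: derivative_eq_intros)
    show "(exp (s*d*t) - 1)/d \<ge> 0" if t: "t \<ge> 0" for t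
    proof (cases "d > 0")
      case True
      then show ?thesis using s t by simp
    next
      case False
      then have "d < 0" and "s*d*t \<le> 0" using \<open>d \<noteq> 0\<close> s t
        by (auto simp: mult_nonneg_nonpos mult_nonpos_nonneg)
      then show ?thesis by (simp add: divide_nonpos_neg)
    qed
  qed simp
qed

lemma riccati_ode_unique:
  fixes Y Z :: "real \<Rightarrow> real" and s r d t :: real
  assumes dY: "\<And>t. t \<ge> 0 \<Longrightarrow> (Y has_real_derivative s*(Y t - r)*(Y t - r - d)) (at t within {0..})"
    and dZ: "\<And>t. t \<ge> 0 \<Longrightarrow> (Z has_real_derivative s*(Z t - r)*(Z t - r - d)) (at t within {0..})"
    and init: "Y 0 = Z 0" and t: "t \<ge> 0"
  shows "Y t = Z t"
proof -
  have "continuous_on {0..} Y" "continuous_on {0..} Z"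
    using DERIV_continuous[OF dY] DERIV_continuous[OF dZ]
    by (auto simp: continuous_on_eq_continuous_within)
  then have cY: "continuous_on {0..t} Y" and cZ: "continuous_on {0..t} Z"
    by (auto elim: continuous_on_subset)
  define g where "g \<tau> = s*(Y \<tau> + Z \<tau> - 2*r - d)" for \<tau>
  have g_cont: "continuous_on {0..t} (\<lambda>\<tau>. \<bar>g \<tau>\<bar>)"
    unfolding g_def using cY cZ by (intro continuous_intros)
  obtain m where "m \<in> {0..t}" and g_le: "\<And>\<tau>. \<tau> \<in> {0..t} \<Longrightarrow> \<bar>g \<tau>\<bar> \<le> \<bar>g m\<bar>"
    using continuous_attains_sup[OF compact_Icc _ g_cont] t by auto
  define M where "M = \<bar>g m\<bar>"
  \<comment> \<open>Since \<open>(Y - Z)' = g (Y - Z)\<close>, the weighted square \<open>h\<close> is nonincreasing (Gronwall).\<close>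
  define h where "h \<tau> = (Y \<tau> - Z \<tau>)^2 * exp (-2*M*\<tau>)" for \<tau>
  have "h t \<le> h 0"
  proof (rule DERIV_nonpos_imp_decreasing_open[OF t])
    show "continuous_on {0..t} h" unfolding h_def using cY cZ by (intro continuous_intros)
    fix x assume x: "0 < x" "x < t"
    then have at_x: "at x within {0..} = at x"
      by (intro at_within_interior) simp
    have "(Y has_real_derivative s*(Y x - r)*(Y x - r - d)) (at x)"
      and "(Z has_real_derivative s*(Z x - r)*(Z x - r - d)) (at x)"
      using dY[of x] dZ[of x] x unfolding at_x by auto
    then have "(h has_real_derivative 2*(Y x - Z x)^2*(g x - M)*exp (-2*M*x)) (at x)"
      unfolding h_def by (auto intro!: derivative_eq_intros simp: g_def power2_eq_square algebra_simps)
    moreover have "g x \<le> M" using g_le[of x] x unfolding M_def by auto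
    then have "2*(Y x - Z x)^2*(g x - M)*exp (-2*M*x) \<le> 0"
      by (simp add: mult_nonneg_nonpos2 mult_nonpos_nonneg)
    ultimately show "\<exists>y. (h has_real_derivative y) (at x) \<and> y \<le> 0" by blast
  qed
  then have "(Y t - Z t)^2 * exp (-2*M*t) \<le> 0" using init by (simp add: h_def)
  then show ?thesis by (simp add: mult_le_0_iff)
qed

locale riccati_flow =
  fixes s d r :: real and F :: "real \<Rightarrow> real"
  assumes d_nonneg: "d \<ge> 0"
    and F_deriv: "\<And>t. (F has_real_derivative s * (1 + d * F t)) (at t)"
    and F_0: "F 0 = 0"
    and F_nonneg: "\<And>t. t \<ge> 0 \<Longrightarrow> F t \<ge> 0"
begin

(* The solution at time t, started at x, of y' = s (y - r) (y - r - d). *)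
definition flow :: "real \<Rightarrow> real \<Rightarrow> real" where
  "flow x t = r + (x - r) / (1 - (x - r - d) * F t)"

definition flow_dx :: "real \<Rightarrow> real \<Rightarrow> real" where
  "flow_dx x t = (1 + d * F t) / (1 - (x - r - d) * F t)^2"

lemma flow_denominator_ge_1: "x \<le> r + d \<Longrightarrow> t \<ge> 0 \<Longrightarrow> 1 \<le> 1 - (x - r - d) * F t"
  using F_nonneg[of t] by (simp add: mult_nonpos_nonneg)

lemma flow_at_0 [simp]: "flow x 0 = x"
  by (simp add: flow_def F_0)

lemma flow_has_derivative_x:
  assumes "x \<le> r + d" "t \<ge> 0"
  shows "((\<lambda>y. flow y t) has_real_derivative flow_dx x t) (at x)"
proof -
  have "1 - (x - r - d) * F t \<noteq> 0" using flow_denominator_ge_1[OF assms] by linarith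
  then show ?thesis
    unfolding flow_def flow_dx_def
    by (auto intro!: derivative_eq_intros simp: field_simps power2_eq_square)
qed

lemma flow_has_derivative_t:
  assumes "x \<le> r + d" "t \<ge> 0"
  shows "((\<lambda>\<tau>. flow x \<tau>) has_real_derivative s*(x - r)*(x - r - d) * flow_dx x t) (at t)"
proof -
  have "1 - (x - r - d) * F t \<noteq> 0" using flow_denominator_ge_1[OF assms] by linarith
  then show ?thesis
    unfolding flow_def flow_dx_def
    by (auto intro!: derivative_eq_intros F_deriv simp: field_simps power2_eq_square)
qed

lemma flow_ode:
  assumes "x \<le> r + d" "t \<ge> 0"
  shows "((\<lambda>\<tau>. flow x \<tau>) has_real_derivative s*(flow x t - r)*(flow x t - r - d)) (at t)"
proof -
  define D where "D = 1 - (x - r - d) * F t"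
  have "D \<noteq> 0" using flow_denominator_ge_1[OF assms] by (simp add: D_def)
  have "flow x t - r - d = (x - r - d) * (1 + d * F t) / D"
    using \<open>D \<noteq> 0\<close> by (simp add: flow_def D_def field_simps)
  then have rhs: "s*(flow x t - r)*(flow x t - r - d) = s*(x - r)*(x - r - d) * flow_dx x t"
    by (simp add: flow_def flow_dx_def D_def[symmetric] power2_eq_square)
  show ?thesis using flow_has_derivative_t[OF assms] unfolding rhs .
qed

lemma flow_tangent_le:
  assumes x: "x \<le> r + d" and y: "y \<le> r + d" and t: "t \<ge> 0"
  shows "(y - x) * flow_dx x t \<le> flow y t - flow x t"
proof -
  define D where "D = 1 - (x - r - d) * F t"
  define D' where "D' = 1 - (y - r - d) * F t"
  have D: "D \<ge> 1" and D': "D' \<ge> 1"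
    using flow_denominator_ge_1[OF x t] flow_denominator_ge_1[OF y t] by (simp_all add: D_def D'_def)
  have "flow y t - flow x t = ((y - r) * D - (x - r) * D') / (D * D')"
    using D D' by (simp add: flow_def D_def D'_def field_simps)
  also have "(y - r) * D - (x - r) * D' = (1 + d * F t) * (y - x)"
    by (simp add: D_def D'_def algebra_simps)
  finally have diff: "flow y t - flow x t = (1 + d * F t) * (y - x) / (D * D')" .
  have dx: "flow_dx x t = (1 + d * F t) / D^2" by (simp add: flow_dx_def D_def)
  have D_diff: "D - D' = (y - x) * F t" by (simp add: D_def D'_def algebra_simps)
  have "flow y t - flow x t - (y - x) * flow_dx x t = (1 + d * F t) * (y - x) * (D - D') / (D^2 * D')"
    unfolding diff dx using D D' by (simp add: field_simps power2_eq_square)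
  also have "\<dots> = (1 + d * F t) * F t * (y - x)^2 / (D^2 * D')"
    unfolding D_diff by (simp add: power2_eq_square)
  also have "\<dots> \<ge> 0"
    using F_nonneg[OF t] d_nonneg D D' by (intro divide_nonneg_nonneg mult_nonneg_nonneg) auto
  finally show ?thesis by simp
qed

lemma flow_continuous_on: "continuous_on ({..r + d} \<times> {0..}) (\<lambda>(x, t). flow x t)"
proof -
  have "continuous_on UNIV F" using F_deriv by (intro DERIV_continuous_on) auto
  then have "continuous_on ({..r + d} \<times> {0..}) (\<lambda>p. F (snd p))"
    by (rule continuous_on_compose2[OF _ continuous_on_snd]) auto
  moreover have "1 - (fst p - r - d) * F (snd p) \<noteq> 0" if "p \<in> {..r + d} \<times> {0..}" for p
    using that flow_denominator_ge_1[of "fst p" "snd p"] by auto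
  ultimately show ?thesis
    unfolding flow_def case_prod_beta by (intro continuous_intros) auto
qed

end

lemma jump_up_in_unit_interval:
  fixes x g :: real
  assumes "x \<in> {0..1}" "g \<in> {0..1}"
  shows "x + g * (1 - x) \<in> {0..1}"
  using assms mult_left_le_one_le[of "1 - x" g] by auto

lemma jump_down_in_unit_interval:
  fixes x g :: real
  assumes "x \<in> {0..1}" "g \<in> {0..1}"
  shows "x - g * x \<in> {0..1}"
proof -
  have "0 \<le> g * x" "g * x \<le> x" using assms by (auto intro: mult_left_le_one_le)
  then show ?thesis using assms by auto
qed

lemma DERIV_nonneg_at_left_max:
  fixes g :: "real \<Rightarrow> real"
  assumes "(g has_real_derivative D) (at \<tau>)" and "a < \<tau>"
    and "\<And>y. a \<le> y \<Longrightarrow> y \<le> \<tau> \<Longrightarrow> g y \<le> g \<tau>"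
  shows "D \<ge> 0"
proof (rule ccontr)
  assume "\<not> D \<ge> 0"
  then obtain \<delta> where "\<delta> > 0" and dec: "\<And>h. 0 < h \<Longrightarrow> h < \<delta> \<Longrightarrow> g \<tau> < g (\<tau> - h)"
    using DERIV_neg_dec_left[OF assms(1)] by force
  define h where "h = min (\<delta>/2) (\<tau> - a)"
  have "0 < h" "h < \<delta>" using \<open>\<delta> > 0\<close> \<open>a < \<tau>\<close> by (auto simp: h_def)
  then have "g \<tau> < g (\<tau> - h)" by (rule dec)
  moreover have "g (\<tau> - h) \<le> g \<tau>" using \<open>0 < h\<close> by (intro assms(3)) (auto simp: h_def)
  ultimately show False by simp
qed

lemma DERIV_at_max_on_unit_interval:
  fixes g :: "real \<Rightarrow> real"
  assumes "(g has_real_derivative D) (at a within {0..1})" and "a \<in> {0..1}"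
    and "\<And>y. y \<in> {0..1} \<Longrightarrow> g y \<le> g a"
  shows "(1 - a) * a * D = 0"
proof (cases "a = 0 \<or> a = 1")
  case False
  then have a: "0 < a" "a < 1" using assms(2) by auto
  then have "(g has_real_derivative D) (at a)"
    using assms(1) at_within_interior[of a "{0..1}"] by simp
  then have "D = 0"
  proof (rule DERIV_local_max[of _ _ _ "min a (1 - a)"])
    show "\<forall>y. \<bar>a - y\<bar> < min a (1 - a) \<longrightarrow> g y \<le> g a"
      using assms(3) by (auto simp: abs_less_iff)
  qed (use a in auto)
  then show ?thesis by simp
qed auto

locale nonlocal_transport =
  fixes s ca cb ga gb :: real
  assumes ca_nonneg: "ca \<ge> 0" and cb_nonneg: "cb \<ge> 0"
    and ga: "ga \<in> {0..1}" and gb: "gb \<in> {0..1}"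
begin

(* Left-hand side minus right-hand side of the nonlocal equation, Wx and Wt standing for the
   partial derivatives of W. *)
definition residual ::
    "(real \<Rightarrow> real \<Rightarrow> real) \<Rightarrow> (real \<Rightarrow> real \<Rightarrow> real) \<Rightarrow> (real \<Rightarrow> real \<Rightarrow> real) \<Rightarrow> real \<Rightarrow> real \<Rightarrow> real"
  where "residual W Wx Wt x t = Wt x t + s * (1 - x) * x * Wx x t
      - ca * (W (x + ga * (1 - x)) t - W x t) - cb * (W (x - gb * x) t - W x t)"

lemma residual_diff:
  "residual (\<lambda>x t. V x t - U x t) (\<lambda>x t. Vx x t - Ux x t) (\<lambda>x t. Vt x t - Ut x t) x t
    = residual V Vx Vt x t - residual U Ux Ut x t"
  by (simp add: residual_def algebra_simps)

lemma residual_nonpos_if_convex_transported: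
  assumes x: "x \<in> {0..1}"
    and tangent: "\<And>y. y \<in> {0..1} \<Longrightarrow> (y - x) * Wx x t \<le> W y t - W x t"
    and transport: "Wt x t = (- s * x * (1 - x) + ca * ga * (1 - x) - cb * gb * x) * Wx x t"
  shows "residual W Wx Wt x t \<le> 0"
proof -
  have "ca * (ga * (1 - x) * Wx x t) \<le> ca * (W (x + ga * (1 - x)) t - W x t)"
    using tangent[OF jump_up_in_unit_interval[OF x ga]] ca_nonneg by (intro mult_left_mono) auto
  moreover have "cb * (- gb * x * Wx x t) \<le> cb * (W (x - gb * x) t - W x t)"
    using tangent[OF jump_down_in_unit_interval[OF x gb]] cb_nonneg by (intro mult_left_mono) auto
  ultimately show ?thesis
    unfolding residual_def transport by (simp add: algebra_simps)
qed

context
  fixes W Wx Wt :: "real \<Rightarrow> real \<Rightarrow> real"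
  assumes W_cont: "continuous_on ({0..1} \<times> {0..}) (\<lambda>(x, t). W x t)"
    and W_dx: "\<And>x t. x \<in> {0..1} \<Longrightarrow> t > 0 \<Longrightarrow>
      ((\<lambda>y. W y t) has_real_derivative Wx x t) (at x within {0..1})"
    and W_dt: "\<And>x t. x \<in> {0..1} \<Longrightarrow> t > 0 \<Longrightarrow>
      ((\<lambda>\<tau>. W x \<tau>) has_real_derivative Wt x t) (at t within {0..})"
    and W_sub: "\<And>x t. x \<in> {0..1} \<Longrightarrow> t > 0 \<Longrightarrow> residual W Wx Wt x t \<le> 0"
    and W_init: "\<And>x. x \<in> {0..1} \<Longrightarrow> W x 0 \<le> 0"
begin

(* At a positive-time maximum of W x t - e * t the penalty forces Wt >= e, while the transport
   term vanishes and the jump terms are nonpositive, so residual >= e > 0. *)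
lemma penalized_max_principle:
  assumes e: "e > 0" and x: "x \<in> {0..1}" and t: "t \<ge> 0"
  shows "W x t \<le> e * t"
proof -
  define S where "S = {0..1::real} \<times> {0..t}"
  have "continuous_on S (\<lambda>(x, t). W x t)"
    by (rule continuous_on_subset[OF W_cont]) (auto simp: S_def)
  then have "continuous_on S (\<lambda>p. W (fst p) (snd p) - e * snd p)"
    unfolding case_prod_beta by (intro continuous_intros)
  moreover have "compact S" "S \<noteq> {}" using t by (auto simp: S_def compact_Times)
  ultimately obtain p where "p \<in> S"
    and p_max: "\<forall>q\<in>S. W (fst q) (snd q) - e * snd q \<le> W (fst p) (snd p) - e * snd p"
    using continuous_attains_sup[of S] by blast
  obtain a \<tau> where p: "p = (a, \<tau>)" and a: "a \<in> {0..1}" and \<tau>: "\<tau> \<in> {0..t}"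
    using \<open>p \<in> S\<close> by (cases p) (auto simp: S_def)
  have max: "W y r - e * r \<le> W a \<tau> - e * \<tau>" if "y \<in> {0..1}" "r \<in> {0..t}" for y r
    using p_max[rule_format, of "(y, r)"] that by (simp add: S_def p)
  show ?thesis
  proof (cases "\<tau> = 0")
    case True
    then show ?thesis using max[of x t] x t W_init[OF a] by simp
  next
    case False
    then have \<tau>_pos: "\<tau> > 0" using \<tau> by simp
    have "((\<lambda>r. W a r - e * r) has_real_derivative Wt a \<tau> - e) (at \<tau>)"
      using W_dt[OF a \<tau>_pos] at_within_interior[of \<tau> "{0..}"] \<tau>_pos
      by (auto intro!: derivative_eq_intros)
    then have "Wt a \<tau> - e \<ge> 0"
      by (rule DERIV_nonneg_at_left_max[where a = 0]) (use \<tau>_pos \<tau> max[OF a] in auto)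
    moreover have "(1 - a) * a * Wx a \<tau> = 0"
      by (rule DERIV_at_max_on_unit_interval[OF W_dx[OF a \<tau>_pos] a]) (use max[OF _ \<tau>] in simp)
    then have "s * (1 - a) * a * Wx a \<tau> = 0" by (simp add: mult.assoc)
    moreover have "W (a + ga * (1 - a)) \<tau> \<le> W a \<tau>" "W (a - gb * a) \<tau> \<le> W a \<tau>"
      using max[OF jump_up_in_unit_interval[OF a ga] \<tau>] max[OF jump_down_in_unit_interval[OF a gb] \<tau>]
      by auto
    then have "ca * (W (a + ga * (1 - a)) \<tau> - W a \<tau>) \<le> 0" "cb * (W (a - gb * a) \<tau> - W a \<tau>) \<le> 0"
      using ca_nonneg cb_nonneg by (simp_all add: mult_nonneg_nonpos)
    ultimately have "residual W Wx Wt a \<tau> \<ge> e"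
      unfolding residual_def by linarith
    then show ?thesis using W_sub[OF a \<tau>_pos] e by simp
  qed
qed

lemma max_principle:
  assumes "x \<in> {0..1}" "t \<ge> 0"
  shows "W x t \<le> 0"
proof (rule field_le_epsilon)
  fix e :: real assume "e > 0"
  then have "W x t \<le> e / (t + 1) * t" using assms by (intro penalized_max_principle) auto
  also have "\<dots> \<le> e" using \<open>e > 0\<close> assms by (simp add: field_simps)
  finally show "W x t \<le> 0 + e" by simp
qed

end

lemma comparison_principle:
  assumes "continuous_on ({0..1} \<times> {0..}) (\<lambda>(x, t). V x t)"
    and "continuous_on ({0..1} \<times> {0..}) (\<lambda>(x, t). U x t)"
    and "\<And>x t. x \<in> {0..1} \<Longrightarrow> t > 0 \<Longrightarrow>
      ((\<lambda>y. V y t) has_real_derivative Vx x t) (at x within {0..1})"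
    and "\<And>x t. x \<in> {0..1} \<Longrightarrow> t > 0 \<Longrightarrow>
      ((\<lambda>y. U y t) has_real_derivative Ux x t) (at x within {0..1})"
    and "\<And>x t. x \<in> {0..1} \<Longrightarrow> t > 0 \<Longrightarrow>
      ((\<lambda>\<tau>. V x \<tau>) has_real_derivative Vt x t) (at t within {0..})"
    and "\<And>x t. x \<in> {0..1} \<Longrightarrow> t > 0 \<Longrightarrow>
      ((\<lambda>\<tau>. U x \<tau>) has_real_derivative Ut x t) (at t within {0..})"
    and "\<And>x t. x \<in> {0..1} \<Longrightarrow> t > 0 \<Longrightarrow> residual V Vx Vt x t \<le> residual U Ux Ut x t"
    and "\<And>x. x \<in> {0..1} \<Longrightarrow> V x 0 \<le> U x 0"
    and "x \<in> {0..1}" "t \<ge> 0"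
  shows "V x t \<le> U x t"
proof -
  have "V x t - U x t \<le> 0"
  proof (rule max_principle[where W = "\<lambda>x t. V x t - U x t" and Wx = "\<lambda>x t. Vx x t - Ux x t" and Wt = "\<lambda>x t. Vt x t - Ut x t"])
    show "continuous_on ({0..1} \<times> {0..}) (\<lambda>(x, t). V x t - U x t)"
      using continuous_on_diff[OF assms(1,2)] by (simp add: case_prod_beta)
    show "((\<lambda>y. V y t - U y t) has_real_derivative Vx x t - Ux x t) (at x within {0..1})"
      if "x \<in> {0..1}" "t > 0" for x t
      using assms(3,4)[OF that] by (rule DERIV_diff)
    show "((\<lambda>\<tau>. V x \<tau> - U x \<tau>) has_real_derivative Vt x t - Ut x t) (at t within {0..})"
      if "x \<in> {0..1}" "t > 0" for x t
      using assms(5,6)[OF that] by (rule DERIV_diff)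
    show "residual (\<lambda>x t. V x t - U x t) (\<lambda>x t. Vx x t - Ux x t) (\<lambda>x t. Vt x t - Ut x t) x t \<le> 0"
      if "x \<in> {0..1}" "t > 0" for x t
      using assms(7)[OF that] by (simp add: residual_diff)
    show "V x 0 - U x 0 \<le> 0" if "x \<in> {0..1}" for x
      using assms(8)[OF that] by simp
  qed (use assms(9,10) in auto)
  then show ?thesis by simp
qed

lemma subsolution_le_initial_bound:
  assumes "continuous_on ({0..1} \<times> {0..}) (\<lambda>(x, t). V x t)"
    and "\<And>x t. x \<in> {0..1} \<Longrightarrow> t > 0 \<Longrightarrow>
      ((\<lambda>y. V y t) has_real_derivative Vx x t) (at x within {0..1})"
    and "\<And>x t. x \<in> {0..1} \<Longrightarrow> t > 0 \<Longrightarrow>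
      ((\<lambda>\<tau>. V x \<tau>) has_real_derivative Vt x t) (at t within {0..})"
    and "\<And>x t. x \<in> {0..1} \<Longrightarrow> t > 0 \<Longrightarrow> residual V Vx Vt x t \<le> 0"
    and "\<And>x. x \<in> {0..1} \<Longrightarrow> V x 0 \<le> c"
    and "x \<in> {0..1}" "t \<ge> 0"
  shows "V x t \<le> c"
proof (rule comparison_principle[where V = V and U = "\<lambda>_ _. c" and Ux = "\<lambda>_ _. 0" and Ut = "\<lambda>_ _. 0"])
  show "continuous_on ({0..1} \<times> {0..}) (\<lambda>(x::real, t::real). c)"
    by (simp add: case_prod_beta)
qed (use assms in \<open>auto simp: residual_def\<close>)

end

locale quasispecies_flow =
  riccati_flow s d r F + nonlocal_transport \<sigma> ca cb ga gb
  for s d r F \<sigma> ca cb ga gb +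
  assumes larger_root_ge_1: "1 \<le> r + d"
    and drift: "\<And>y. s * (y - r) * (y - r - d)
      = - \<sigma> * y * (1 - y) + ca * ga * (1 - y) - cb * gb * y"
begin

lemma le_larger_root: "x \<in> {0..1} \<Longrightarrow> x \<le> r + d"
  using larger_root_ge_1 by auto

lemma flow_subsolution:
  assumes x: "x \<in> {0..1}" and t: "t \<ge> 0"
  shows "residual flow flow_dx (\<lambda>x t. s * (x - r) * (x - r - d) * flow_dx x t) x t \<le> 0"
proof (rule residual_nonpos_if_convex_transported[OF x])
  show "(y - x) * flow_dx x t \<le> flow y t - flow x t" if "y \<in> {0..1}" for y
    using flow_tangent_le[OF le_larger_root[OF x] le_larger_root[OF that] t] .
qed (simp add: drift)

lemma flow_le_supersolution:
  assumes "continuous_on ({0..1} \<times> {0..}) (\<lambda>(x, t). U x t)"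
    and "\<And>x t. x \<in> {0..1} \<Longrightarrow> t > 0 \<Longrightarrow>
      ((\<lambda>y. U y t) has_real_derivative Ux x t) (at x within {0..1})"
    and "\<And>x t. x \<in> {0..1} \<Longrightarrow> t > 0 \<Longrightarrow>
      ((\<lambda>\<tau>. U x \<tau>) has_real_derivative Ut x t) (at t within {0..})"
    and "\<And>x t. x \<in> {0..1} \<Longrightarrow> t > 0 \<Longrightarrow> residual U Ux Ut x t \<ge> 0"
    and "\<And>x. x \<in> {0..1} \<Longrightarrow> x \<le> U x 0"
    and "x \<in> {0..1}" "t \<ge> 0"
  shows "flow x t \<le> U x t"
proof (rule comparison_principle[where V = flow and Vx = flow_dx and U = U
      and Vt = "\<lambda>x t. s * (x - r) * (x - r - d) * flow_dx x t"])
  show "continuous_on ({0..1} \<times> {0..}) (\<lambda>(x, t). flow x t)"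
    using flow_continuous_on by (rule continuous_on_subset) (use larger_root_ge_1 in auto)
  show "((\<lambda>y. flow y t) has_real_derivative flow_dx x t) (at x within {0..1})"
    if "x \<in> {0..1}" "t > 0" for x t
    using flow_has_derivative_x[OF le_larger_root[OF that(1)]] that
    by (simp add: has_field_derivative_at_within)
  show "((\<lambda>\<tau>. flow x \<tau>) has_real_derivative s * (x - r) * (x - r - d) * flow_dx x t) (at t within {0..})"
    if "x \<in> {0..1}" "t > 0" for x t
    using flow_has_derivative_t[OF le_larger_root[OF that(1)]] that
    by (simp add: has_field_derivative_at_within)
  show "residual flow flow_dx (\<lambda>x t. s * (x - r) * (x - r - d) * flow_dx x t) x t
      \<le> residual U Ux Ut x t" if "x \<in> {0..1}" "t > 0" for x t
    using flow_subsolution[of x t] assms(4)[of x t] that by simp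
qed (use assms in auto)

end

theorem proposition4p4:
  fixes f0 f1 lam0 lam1 gam0 gam1 :: real
    and u ux ut :: "real \<Rightarrow> real \<Rightarrow> real"
    and X :: "real \<Rightarrow> real \<Rightarrow> real"
  defines "\<sigma> \<equiv> f0 - f1"
      and "m0 \<equiv> lam0 * gam0"
      and "m1 \<equiv> lam1 * gam1"
  assumes f0_pos: "f0 > 0" and f1_nonneg: "f1 \<ge> 0" and sigma_pos: "\<sigma> > 0"
    and lam0: "lam0 \<ge> 0" and lam1: "lam1 \<ge> 0"
    and gam0: "0 < gam0" "gam0 \<le> 1" and gam1: "0 < gam1" "gam1 \<le> 1"
    \<comment> \<open>u is a (smooth) solution of the Cauchy problem on [0,1] x [0,oo)\<close>
    and u_cont: "continuous_on ({0..1} \<times> {0..}) (\<lambda>(x, t). u x t)"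
    and ux_cont: "continuous_on ({0..1} \<times> {0..}) (\<lambda>(x, t). ux x t)"
    and ut_cont: "continuous_on ({0..1} \<times> {0..}) (\<lambda>(x, t). ut x t)"
    and u_dx: "\<And>x t. x \<in> {0..1} \<Longrightarrow> t \<ge> 0 \<Longrightarrow>
                 ((\<lambda>y. u y t) has_real_derivative ux x t) (at x within {0..1})"
    and u_dt: "\<And>x t. x \<in> {0..1} \<Longrightarrow> t \<ge> 0 \<Longrightarrow>
                 ((\<lambda>s. u x s) has_real_derivative ut x t) (at t within {0..})"
    and u_pde: "\<And>x t. x \<in> {0..1} \<Longrightarrow> t > 0 \<Longrightarrow>
                 ut x t + \<sigma> * (1 - x) * x * ux x t
                 = lam0 * f0 * (u (x + gam0 * (1 - x)) t - u x t)
                 + lam1 * f1 * (u (x - gam1 * x) t - u x t)"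
    and u_init: "\<And>x. x \<in> {0..1} \<Longrightarrow> u x 0 = x"
    \<comment> \<open>X x t is the solution at time t of the quasispecies ODE started at x\<close>
    and X_init: "\<And>x. x \<in> {0..1} \<Longrightarrow> X x 0 = x"
    and X_ode: "\<And>x t. x \<in> {0..1} \<Longrightarrow> t \<ge> 0 \<Longrightarrow>
                 ((\<lambda>s. X x s) has_real_derivative
                   (- \<sigma> * X x t * (1 - X x t) + m0 * f0 * (1 - X x t) - m1 * f1 * X x t))
                 (at t within {0..})"
  shows "\<forall>x\<in>{0..1}. \<forall>t\<ge>0. X x t \<le> u x t \<and> u x t \<le> 1"
proof -
  have "m0 * f0 \<ge> 0" "m1 * f1 \<ge> 0"
    using lam0 lam1 gam0 gam1 f0_pos f1_nonneg by (simp_all add: m0_def m1_def)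
  then obtain r d where "d \<ge> 0" and "1 \<le> r + d" and factor:
      "\<And>y. - \<sigma> * y * (1 - y) + m0 * f0 * (1 - y) - m1 * f1 * y = \<sigma> * (y - r) * (y - r - d)"
    by (rule quasispecies_field_factorization[OF sigma_pos]) blast
  obtain F where F: "\<And>t. (F has_real_derivative \<sigma> * (1 + d * F t)) (at t)"
      "F 0 = 0" "\<And>t. t \<ge> 0 \<Longrightarrow> F t \<ge> 0"
    using linear_ode_nonneg_solution_exists[OF less_imp_le[OF sigma_pos], of d] by blast
  have drift: "\<sigma> * (y - r) * (y - r - d)
      = - \<sigma> * y * (1 - y) + lam0 * f0 * gam0 * (1 - y) - lam1 * f1 * gam1 * y" for y
    unfolding factor[symmetric] m0_def m1_def by (simp add: algebra_simps)
  interpret quasispecies_flow \<sigma> d r F \<sigma> "lam0 * f0" "lam1 * f1" gam0 gam1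
    using F drift \<open>d \<ge> 0\<close> \<open>1 \<le> r + d\<close> lam0 lam1 f0_pos f1_nonneg gam0 gam1
    by unfold_locales auto
  have u_solves: "residual u ux ut x t = 0" if "x \<in> {0..1}" "t > 0" for x t
    using u_pde[OF that] by (simp add: residual_def)
  have X_flow: "X x t = flow x t" if x: "x \<in> {0..1}" and t: "t \<ge> 0" for x t
  proof (rule riccati_ode_unique[where s = \<sigma> and r = r and d = d, OF _ _ _ t])
    show "(X x has_real_derivative \<sigma> * (X x \<tau> - r) * (X x \<tau> - r - d)) (at \<tau> within {0..})"
      if "\<tau> \<ge> 0" for \<tau>
      using X_ode[OF x that] unfolding factor .
    show "(flow x has_real_derivative \<sigma> * (flow x \<tau> - r) * (flow x \<tau> - r - d)) (at \<tau> within {0..})"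
      if "\<tau> \<ge> 0" for \<tau>
      using flow_ode[OF le_larger_root[OF x] that] by (rule has_field_derivative_at_within)
  qed (use X_init[OF x] in simp)
  have "flow x t \<le> u x t" if "x \<in> {0..1}" "t \<ge> 0" for x t
    by (rule flow_le_supersolution[where U = u and Ux = ux and Ut = ut])
      (use that u_cont u_dx u_dt u_solves u_init in auto)
  moreover have "u x t \<le> 1" if "x \<in> {0..1}" "t \<ge> 0" for x t
    by (rule subsolution_le_initial_bound[where V = u and Vx = ux and Vt = ut])
      (use that u_cont u_dx u_dt u_solves u_init in auto)
  ultimately show ?thesis
    using X_flow by simp
qed

end
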